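(* Let $\mathbf X=(X_1,\dots,X_k)$, $2\le k\le n-1$, be homogeneous coordinates of proper cycles and $S$ a vector with $(S\mid S)\le0$, with $X_1,\dots,X_k,S$ linearly independent and $\Delta(\mathbf X,S)<0$. Let $y$ be a proper cycle with $y\notin\langle\mathbf x,s\rangle$ and $(Y\mid S)\ne0$. Define $h(x)=\Delta(X,Y,S)/(\Delta(X,S)\Delta(Y,S))$ on the open set of $x\in\langle\mathbf x,s\rangle$ with $\Delta(X,S)\neq0$. Let $p=P_{\langle\mathbf x,s\rangle}(y)$ (coordinates $P_{\langle\mathbf X,S\rangle}Y$) and assume $p\neq s$. Then $h$ is defined at $p$, $h(p)=\delta(\mathbf x,y,s)$, and $p$ is a critical point of $h$. If moreover $(S\mid S)<0$, then there is a cycle $x_0\in\langle\mathbf x,s\rangle\cap\langle s\rangle^\perp$, $x_0\neq s$, with $(X_0\mid Y)=0$; every such $x_0$ is a critical point of $h$ and $h(x_0)=1/(S\mid S)$.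
   Context: Let $n\ge 3$. For $X=(\xi_0,\boldsymbol\xi_1,\xi_2,\xi_3)$ and $Y=(\eta_0,\boldsymbol\eta_1,\eta_2,\eta_3)$ in $\mathbb{R}^{n+3}=\mathbb{R}\times\mathbb{R}^n\times\mathbb{R}\times\mathbb{R}$, the Lie product is the nondegenerate symmetric bilinear form $(X\mid Y)=\xi_0\eta_2+\boldsymbol\xi_1\cdot\boldsymbol\eta_1+\xi_2\eta_0-\xi_3\eta_3$. Points of $\mathbb{P}^{n+2}$ are cycles; lowercase letters denote cycles and uppercase letters their homogeneous coordinate vectors; a cycle is proper if $(X\mid X)=0$. For a list $\mathbf X$, $\langle\mathbf X\rangle$ is its span, $\langle\mathbf x\rangle$ the projective subspace, $\langle s\rangle^\perp$ the projectivization of $\{Z:(Z\mid S)=0\}$, and $\Delta(\mathbf X)=\det[(X_i\mid X_j)]$. $P_{\langle\mathbf X,S\rangle}$ is the Lie orthogonal projection onto $\langle\mathbf X,S\rangle$ along $\langle\mathbf X,S\rangle^\perp$, and $P_{\langle\mathbf x,s\rangle}$ the induced projective map. The discriminant is $\delta(\mathbf x,y,s)=\Delta(\mathbf X,Y,S)/(\Delta(\mathbf X,S)\Delta(Y,S))$. *)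

theory Defs
  imports Complex_Main "Jordan_Normal_Form.Determinant"
begin

text \<open>Vectors of R^(n+3) are represented as functions nat => real that vanish
 from index n+3 on. Coordinates: index 0 = xi_0, indices 1..n = xi_1 (bold),
 index n+1 = xi_2, index n+2 = xi_3.\<close>

definition is_vec :: "nat \<Rightarrow> (nat \<Rightarrow> real) \<Rightarrow> bool" where
  "is_vec n X \<longleftrightarrow> (\<forall>i\<ge>n+3. X i = 0)"

definition lie :: "nat \<Rightarrow> (nat \<Rightarrow> real) \<Rightarrow> (nat \<Rightarrow> real) \<Rightarrow> real" where
  "lie n X Y = X 0 * Y (n+1) + (\<Sum>i\<in>{1..n}. X i * Y i) + X (n+1) * Y 0 - X (n+2) * Y (n+2)"

definition lin_comb :: "(nat \<Rightarrow> real) \<Rightarrow> (nat \<Rightarrow> real) list \<Rightarrow> (nat \<Rightarrow> real)" where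
  "lin_comb c Ws = (\<lambda>i. \<Sum>j<length Ws. c j * (Ws!j) i)"

definition lin_indep :: "(nat \<Rightarrow> real) list \<Rightarrow> bool" where
  "lin_indep Ws \<longleftrightarrow> (\<forall>c. lin_comb c Ws = (\<lambda>_. 0) \<longrightarrow> (\<forall>j<length Ws. c j = 0))"

definition span_set :: "(nat \<Rightarrow> real) list \<Rightarrow> (nat \<Rightarrow> real) set" where
  "span_set Ws = {lin_comb c Ws | c. True}"

definition gram_det :: "nat \<Rightarrow> (nat \<Rightarrow> real) list \<Rightarrow> real" where
  "gram_det n Ws = det (mat (length Ws) (length Ws) (\<lambda>(i,j). lie n (Ws!i) (Ws!j)))"

definition lie_proj :: "nat \<Rightarrow> (nat \<Rightarrow> real) list \<Rightarrow> (nat \<Rightarrow> real) \<Rightarrow> (nat \<Rightarrow> real)" where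
  "lie_proj n Ws Y = (THE Z. Z \<in> span_set Ws \<and> (\<forall>W\<in>set Ws. lie n (\<lambda>i. Y i - Z i) W = 0))"

definition hfun :: "nat \<Rightarrow> (nat \<Rightarrow> real) \<Rightarrow> (nat \<Rightarrow> real) \<Rightarrow> (nat \<Rightarrow> real) \<Rightarrow> real" where
  "hfun n Y S Z = gram_det n [Z, Y, S] / (gram_det n [Z, S] * gram_det n [Y, S])"

definition discr :: "nat \<Rightarrow> (nat \<Rightarrow> real) list \<Rightarrow> (nat \<Rightarrow> real) \<Rightarrow> (nat \<Rightarrow> real) \<Rightarrow> real" where
  "discr n Xs Y S = gram_det n (Xs @ [Y, S]) / (gram_det n (Xs @ [S]) * gram_det n [Y, S])"

text \<open>Critical point of f (a degree-0 homogeneous function of the coordinate vector)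
 on the projective subspace spanned by Ws: all directional derivatives along
 directions in span Ws vanish at P.\<close>
definition critical_on :: "(nat \<Rightarrow> real) list \<Rightarrow> ((nat \<Rightarrow> real) \<Rightarrow> real) \<Rightarrow> (nat \<Rightarrow> real) \<Rightarrow> bool" where
  "critical_on Ws f P \<longleftrightarrow>
     (\<forall>V\<in>span_set Ws. ((\<lambda>t. f (\<lambda>i. P i + t * V i)) has_real_derivative 0) (at 0))"

end

theory Submission
  imports Defs
begin

text \<open>
  The Lie form has signature \<open>(n+1, 2)\<close>.  If a subspace containing a negative vector \<open>S\<close>
  contained a second negative vector orthogonal to \<open>S\<close>, the orthogonal complement of the two in it
  would be positive semidefinite, making its Gram determinant \<open>\<ge> 0\<close>; hence \<open>\<Delta>(X,S) < 0\<close> forces the form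
  to be positive definite on \<open>\<langle>X,S\<rangle> \<inter> S\<^sup>\<perp>\<close>.  This gives \<open>\<Delta>(P,S) \<noteq> 0\<close> for the projection \<open>P\<close> of \<open>Y\<close>,
  and \<open>(X\<^sub>0|X\<^sub>0) > 0\<close> for the points \<open>X\<^sub>0\<close>.

  The projection satisfies \<open>(P|V) = (Y|V)\<close> on the span, so \<open>\<Delta>(X,Y,S) = (Y-P|Y-P) \<Delta>(X,S)\<close> with
  \<open>(Y-P|Y-P) = -(P|P)\<close>, and likewise \<open>\<Delta>(P,Y,S) = -(P|P) \<Delta>(P,S)\<close>; thus \<open>h(P) = \<delta>\<close>.  Since
  \<open>h\<close> is a quotient of the quadratic forms \<open>\<Delta>(\<cdot>,Y,S)\<close> and \<open>\<Delta>(\<cdot>,S)\<close>, a point \<open>X\<close> is critical as soon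
  as their polar forms at \<open>X\<close> are proportional on the span; the factor is \<open>-(P|P)\<close> at \<open>P\<close> and
  \<open>-(Y|S)\<^sup>2/(S|S)\<close> at \<open>X\<^sub>0\<close>, where \<open>h\<close> equals \<open>1/(S|S)\<close>.
\<close>

section \<open>The Lie product and spans\<close>

lemma lie_commute: "lie n X Y = lie n Y X"
  unfolding lie_def by (simp add: mult.commute)

lemma lie_add_left: "lie n (\<lambda>i. X i + Z i) W = lie n X W + lie n Z W"
  unfolding lie_def by (simp add: algebra_simps sum.distrib)

lemma lie_scale_left: "lie n (\<lambda>i. a * X i) W = a * lie n X W"
  unfolding lie_def by (simp add: algebra_simps sum_distrib_left)

lemma lie_diff_left: "lie n (\<lambda>i. X i - Z i) W = lie n X W - lie n Z W"
  unfolding lie_def by (simp add: algebra_simps sum_subtractf)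

lemma lie_add_right: "lie n W (\<lambda>i. X i + Z i) = lie n W X + lie n W Z"
  unfolding lie_def by (simp add: algebra_simps sum.distrib)

lemma lie_scale_right: "lie n W (\<lambda>i. a * X i) = a * lie n W X"
  unfolding lie_def by (simp add: algebra_simps sum_distrib_left)

lemma lie_diff_right: "lie n W (\<lambda>i. X i - Z i) = lie n W X - lie n W Z"
  unfolding lie_def by (simp add: algebra_simps sum_subtractf)

lemmas lie_linear =
  lie_add_left lie_scale_left lie_diff_left lie_add_right lie_scale_right lie_diff_right

lemma lie_sum_left: "lie n (\<lambda>i. \<Sum>j\<in>A. f j i) W = (\<Sum>j\<in>A. lie n (f j) W)"
  unfolding lie_def
  by (simp add: algebra_simps sum.distrib sum_distrib_left sum_distrib_right sum_subtractf
      sum.swap[of _ A])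

lemma lie_lin_comb_left: "lie n (lin_comb c Ws) W = (\<Sum>j<length Ws. c j * lie n (Ws!j) W)"
  unfolding lin_comb_def by (simp add: lie_sum_left lie_scale_left)

lemma lie_lin_comb_right: "lie n W (lin_comb c Ws) = (\<Sum>j<length Ws. c j * lie n W (Ws!j))"
  using lie_lin_comb_left[of n c Ws W] by (simp add: lie_commute)

lemma lie_eq_on_span_set:
  assumes "\<forall>W\<in>set Ws. lie n P W = lie n Y W" and "V \<in> span_set Ws"
  shows "lie n P V = lie n Y V"
proof -
  obtain d where "V = lin_comb d Ws" using assms(2) unfolding span_set_def by blast
  moreover have "lie n P (Ws!j) = lie n Y (Ws!j)" if "j < length Ws" for j
    using assms(1) that by simp
  ultimately show ?thesis by (simp add: lie_lin_comb_right)
qed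

lemma nth_in_span_set:
  assumes "j < length Ws"
  shows "Ws!j \<in> span_set Ws"
proof -
  have "lin_comb (\<lambda>l. if l = j then 1 else 0) Ws i = (Ws!j) i" for i
  proof -
    have "lin_comb (\<lambda>l. if l = j then 1 else 0) Ws i
        = (\<Sum>l<length Ws. if l = j then (Ws!l) i else 0)"
      unfolding lin_comb_def by (rule sum.cong) auto
    then show ?thesis using assms by simp
  qed
  then have "lin_comb (\<lambda>l. if l = j then 1 else 0) Ws = Ws!j" ..
  then show ?thesis unfolding span_set_def by (metis (mono_tags, lifting) mem_Collect_eq)
qed

lemma member_in_span_set: "W \<in> set Ws \<Longrightarrow> W \<in> span_set Ws"
  by (metis in_set_conv_nth nth_in_span_set)

lemma zero_in_span_set: "(\<lambda>_. 0) \<in> span_set Ws"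
  unfolding span_set_def lin_comb_def by (rule CollectI, rule exI[of _ "\<lambda>_. 0"]) simp

lemma span_set_add:
  assumes "X \<in> span_set Ws" and "Z \<in> span_set Ws"
  shows "(\<lambda>i. X i + Z i) \<in> span_set Ws"
proof -
  obtain c d where "X = lin_comb c Ws" and "Z = lin_comb d Ws"
    using assms unfolding span_set_def by blast
  then have "(\<lambda>i. X i + Z i) = lin_comb (\<lambda>j. c j + d j) Ws"
    unfolding lin_comb_def by (simp add: algebra_simps sum.distrib)
  then show ?thesis unfolding span_set_def by blast
qed

lemma span_set_scale:
  assumes "X \<in> span_set Ws"
  shows "(\<lambda>i. a * X i) \<in> span_set Ws"
proof -
  obtain c where "X = lin_comb c Ws"
    using assms unfolding span_set_def by blast
  then have "(\<lambda>i. a * X i) = lin_comb (\<lambda>j. a * c j) Ws"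
    unfolding lin_comb_def by (simp add: algebra_simps sum_distrib_left)
  then show ?thesis unfolding span_set_def by blast
qed

lemma span_set_diff:
  assumes "X \<in> span_set Ws" and "Z \<in> span_set Ws"
  shows "(\<lambda>i. X i - Z i) \<in> span_set Ws"
  using span_set_add[OF assms(1) span_set_scale[OF assms(2), of "-1"]] by simp

lemma span_set_sum:
  "finite A \<Longrightarrow> (\<And>j. j \<in> A \<Longrightarrow> f j \<in> span_set Ws) \<Longrightarrow> (\<lambda>i. \<Sum>j\<in>A. f j i) \<in> span_set Ws"
proof (induction A rule: finite_induct)
  case empty
  then show ?case using zero_in_span_set by simp
next
  case (insert x F)
  then have "(\<lambda>i. f x i + (\<Sum>j\<in>F. f j i)) \<in> span_set Ws"
    by (intro span_set_add) auto
  with insert show ?case by simp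
qed

lemma span_set_mono:
  assumes "\<forall>W\<in>set As. W \<in> span_set Bs"
  shows "span_set As \<subseteq> span_set Bs"
proof
  fix X assume "X \<in> span_set As"
  then obtain c where "X = lin_comb c As" unfolding span_set_def by blast
  moreover have "lin_comb c As \<in> span_set Bs"
    unfolding lin_comb_def using assms by (intro span_set_sum span_set_scale) auto
  ultimately show "X \<in> span_set Bs" by simp
qed

lemma span_set_exchange:
  assumes j: "j < length Ws" and cj: "c j \<noteq> 0"
  shows "Ws!j \<in> span_set (lin_comb c Ws # take j Ws @ drop (Suc j) Ws)"
proof -
  let ?B = "lin_comb c Ws # take j Ws @ drop (Suc j) Ws"
  let ?R = "\<lambda>i. \<Sum>l\<in>{..<length Ws}-{j}. c l * (Ws!l) i"
  have "Ws!l \<in> set ?B" if "l < length Ws" "l \<noteq> j" for l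
  proof (cases "l < j")
    case True
    then show ?thesis using that by (auto simp: in_set_conv_nth intro!: exI[of _ l])
  next
    case False
    then have "drop (Suc j) Ws ! (l - Suc j) = Ws!l" "l - Suc j < length (drop (Suc j) Ws)"
      using that by auto
    then show ?thesis by (metis list.set_intros(2) nth_mem set_append UnI2)
  qed
  then have "?R \<in> span_set ?B"
    by (intro span_set_sum span_set_scale member_in_span_set) auto
  moreover have "lin_comb c Ws \<in> span_set ?B" by (rule member_in_span_set) simp
  ultimately have "(\<lambda>i. (1 / c j) * (lin_comb c Ws i - ?R i)) \<in> span_set ?B"
    by (intro span_set_scale span_set_diff)
  moreover have "(\<lambda>i. (1 / c j) * (lin_comb c Ws i - ?R i)) = Ws!j"
  proof
    fix i
    have "lin_comb c Ws i = c j * (Ws!j) i + ?R i"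
      unfolding lin_comb_def by (rule sum.remove) (use j in auto)
    then show "(1 / c j) * (lin_comb c Ws i - ?R i) = (Ws!j) i" using cj by simp
  qed
  ultimately show ?thesis by simp
qed

definition lie_reject :: "nat \<Rightarrow> (nat \<Rightarrow> real) \<Rightarrow> (nat \<Rightarrow> real) \<Rightarrow> (nat \<Rightarrow> real)" where
  "lie_reject n W X = (\<lambda>i. X i - lie n X W / lie n W W * W i)"

lemma lie_reject_left:
  "lie n (lie_reject n W X) Z = lie n X Z - lie n X W / lie n W W * lie n W Z"
  unfolding lie_reject_def by (simp only: lie_diff_left lie_scale_left)

lemma lie_reject_orthogonal: "lie n W W \<noteq> 0 \<Longrightarrow> lie n (lie_reject n W X) W = 0"
  by (simp add: lie_reject_left)

lemma lie_reject_self: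
  assumes "lie n W W \<noteq> 0"
  shows "lie n (lie_reject n W X) (lie_reject n W X) = lie n X X - (lie n X W)^2 / lie n W W"
proof -
  have "lie n W (lie_reject n W X) = 0"
    by (subst lie_commute) (rule lie_reject_orthogonal[OF assms])
  moreover have "lie n X (lie_reject n W X) = lie n X X - lie n X W / lie n W W * lie n W X"
    by (subst lie_commute) (rule lie_reject_left)
  ultimately show ?thesis
    by (simp add: lie_reject_left lie_commute[of n W X] power2_eq_square)
qed

lemma lie_reject_in_span_set:
  "X \<in> span_set Ws \<Longrightarrow> W \<in> span_set Ws \<Longrightarrow> lie_reject n W X \<in> span_set Ws"
  unfolding lie_reject_def by (intro span_set_diff span_set_scale)

lemma in_span_set_lie_reject:
  assumes "lie_reject n W X \<in> span_set Ws" and "W \<in> span_set Ws"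
  shows "X \<in> span_set Ws"
proof -
  have "(\<lambda>i. lie_reject n W X i + lie n X W / lie n W W * W i) \<in> span_set Ws"
    using assms by (intro span_set_add span_set_scale)
  then show ?thesis by (simp add: lie_reject_def)
qed

section \<open>Gram determinants\<close>

lemma det_mat_2: "det (mat 2 2 f) = f (0,0) * f (1,1) - f (0,1) * f (1,0)"
  by (subst laplace_expansion_row[of _ 2 0])
    (auto simp: cofactor_def mat_delete_def numeral_2_eq_2 lessThan_Suc det_single)

lemma det_mat_3:
  "det (mat 3 3 f) = f (0,0) * (f (1,1) * f (2,2) - f (1,2) * f (2,1))
    - f (0,1) * (f (1,0) * f (2,2) - f (1,2) * f (2,0))
    + f (0,2) * (f (1,0) * f (2,1) - f (1,1) * f (2,0))"
proof -
  have det2: "det (mat (Suc (Suc 0)) (Suc (Suc 0)) g) = g (0,0) * g (1,1) - g (0,1) * g (1,0)" for g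
    using det_mat_2 by (simp add: numeral_2_eq_2)
  show ?thesis
    by (subst laplace_expansion_row[of _ 3 0])
      (auto simp: cofactor_def mat_delete_def numeral_3_eq_3 lessThan_Suc det2 numeral_2_eq_2
        algebra_simps)
qed

lemma gram_det_pair: "gram_det n [A, B] = lie n A A * lie n B B - lie n A B * lie n A B"
  by (simp add: gram_det_def det_mat_2[unfolded numeral_2_eq_2] lie_commute[of n B A])

lemma gram_det_triple:
  "gram_det n [A, B, C] =
     lie n A A * (lie n B B * lie n C C - lie n B C * lie n B C)
   - lie n A B * (lie n A B * lie n C C - lie n B C * lie n A C)
   + lie n A C * (lie n A B * lie n B C - lie n B B * lie n A C)"
  by (simp add: gram_det_def det_mat_3[unfolded numeral_3_eq_3] lie_commute[of n B A]
      lie_commute[of n C A] lie_commute[of n C B])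

definition gram_mat :: "nat \<Rightarrow> (nat \<Rightarrow> real) list \<Rightarrow> real mat" where
  "gram_mat n Ws = mat (length Ws) (length Ws) (\<lambda>(i, j). lie n (Ws!i) (Ws!j))"

lemma gram_mat_carrier: "gram_mat n Ws \<in> carrier_mat (length Ws) (length Ws)"
  by (simp add: gram_mat_def)

lemma gram_det_def': "gram_det n Ws = det (gram_mat n Ws)"
  unfolding gram_det_def gram_mat_def by simp

lemma gram_det_change_basis:
  assumes "length As = m" and "length Bs = m" and "\<forall>i<m. As!i = lin_comb (C i) Bs"
  shows "gram_det n As = det (mat m m (\<lambda>(i, j). C i j))^2 * gram_det n Bs"
proof -
  let ?M = "mat m m (\<lambda>(i, j). C i j)" and ?G = "gram_mat n Bs"
  have M: "?M \<in> carrier_mat m m" and G: "?G \<in> carrier_mat m m"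
    using assms(2) gram_mat_carrier by auto
  have eq: "gram_mat n As = ?M * ?G * ?M\<^sup>T"
  proof (rule eq_matI)
    fix i j assume "i < dim_row (?M * ?G * ?M\<^sup>T)" and "j < dim_col (?M * ?G * ?M\<^sup>T)"
    then have i: "i < m" and j: "j < m" by auto
    have "gram_mat n As $$ (i, j) = lie n (lin_comb (C i) Bs) (lin_comb (C j) Bs)"
      using i j assms by (simp add: gram_mat_def)
    also have "\<dots> = (\<Sum>a<m. C i a * (\<Sum>b<m. C j b * lie n (Bs!a) (Bs!b)))"
      by (simp add: lie_lin_comb_left lie_lin_comb_right assms(2) sum_distrib_left)
        (subst sum.swap, simp add: mult.left_commute)
    also have "\<dots> = (\<Sum>b<m. (\<Sum>a<m. C i a * lie n (Bs!a) (Bs!b)) * C j b)"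
      by (simp add: sum_distrib_left sum_distrib_right)
        (subst sum.swap, simp add: mult.left_commute mult.commute)
    also have "\<dots> = (?M * ?G * ?M\<^sup>T) $$ (i, j)"
      using i j assms(2) by (simp add: gram_mat_def scalar_prod_def atLeast0LessThan)
    finally show "gram_mat n As $$ (i, j) = (?M * ?G * ?M\<^sup>T) $$ (i, j)" .
  qed (use assms in \<open>auto simp: gram_mat_def\<close>)
  have "det (?M * ?G * ?M\<^sup>T) = det ?M * det ?G * det ?M\<^sup>T"
    by (metis G M det_mult mult_carrier_mat transpose_carrier_mat)
  also have "\<dots> = det ?M ^ 2 * det ?G"
    using det_transpose[OF M] by (simp add: power2_eq_square)
  finally show ?thesis using eq by (simp add: gram_det_def')
qed

lemma gram_det_change_span:
  assumes "length As = length Bs" and "\<forall>W\<in>set As. W \<in> span_set Bs"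
  shows "\<exists>d. gram_det n As = d^2 * gram_det n Bs"
proof -
  have "\<forall>i. \<exists>c. i < length As \<longrightarrow> As!i = lin_comb c Bs"
    using assms(2) unfolding span_set_def by auto
  then obtain C where "\<forall>i<length As. As!i = lin_comb (C i) Bs" by metis
  then show ?thesis using gram_det_change_basis[OF refl assms(1)[symmetric]] by metis
qed

lemma gram_det_orthogonal_nth:
  assumes k: "k < length Ws"
    and orth: "\<forall>j<length Ws. j \<noteq> k \<longrightarrow> lie n (Ws!k) (Ws!j) = 0"
  shows "gram_det n Ws = lie n (Ws!k) (Ws!k) * gram_det n (take k Ws @ drop (Suc k) Ws)"
proof -
  let ?m = "length Ws" and ?A = "gram_mat n Ws"
  have "det ?A = (\<Sum>j<?m. ?A $$ (k, j) * cofactor ?A k j)"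
    by (rule laplace_expansion_row[OF gram_mat_carrier k])
  also have "\<dots> = ?A $$ (k, k) * cofactor ?A k k
      + (\<Sum>j\<in>{..<?m}-{k}. ?A $$ (k, j) * cofactor ?A k j)"
    by (rule sum.remove) (auto simp: k)
  also have "(\<Sum>j\<in>{..<?m}-{k}. ?A $$ (k, j) * cofactor ?A k j) = 0"
    by (rule sum.neutral) (use orth k in \<open>auto simp: gram_mat_def\<close>)
  also have "mat_delete ?A k k = gram_mat n (take k Ws @ drop (Suc k) Ws)"
    by (rule eq_matI) (use k in \<open>auto simp: mat_delete_def gram_mat_def nth_append min_def\<close>)
  then have "cofactor ?A k k = det (gram_mat n (take k Ws @ drop (Suc k) Ws))"
    by (simp add: cofactor_def)
  finally show ?thesis using k by (simp add: gram_det_def' gram_mat_def)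
qed

lemma gram_det_cons_orthogonal:
  assumes "\<forall>W\<in>set Ws. lie n V W = 0"
  shows "gram_det n (V # Ws) = lie n V V * gram_det n Ws"
  using gram_det_orthogonal_nth[of 0 "V # Ws" n] assms by (auto simp: nth_Cons')

lemma gram_det_cons_reject:
  assumes W: "lie n W W \<noteq> 0"
  shows "\<exists>d. gram_det n (W # Ws) = d^2 * (lie n W W * gram_det n (map (lie_reject n W) Ws))"
proof -
  let ?B = "W # map (lie_reject n W) Ws"
  have W_in: "W \<in> span_set ?B" by (rule member_in_span_set) simp
  have "\<forall>V\<in>set (W # Ws). V \<in> span_set ?B"
  proof
    fix V assume V: "V \<in> set (W # Ws)"
    show "V \<in> span_set ?B"
    proof (cases "V = W")
      case False
      then have "lie_reject n W V \<in> set ?B" using V by simp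
      then show ?thesis using in_span_set_lie_reject[OF member_in_span_set W_in] by blast
    qed (use W_in in simp)
  qed
  then obtain d where "gram_det n (W # Ws) = d^2 * gram_det n ?B"
    using gram_det_change_span[of "W # Ws" ?B] by auto
  moreover have "gram_det n ?B = lie n W W * gram_det n (map (lie_reject n W) Ws)"
    by (rule gram_det_cons_orthogonal)
      (auto simp: lie_commute[of n W] lie_reject_orthogonal[OF W])
  ultimately show ?thesis by auto
qed

lemma gram_mat_mult_vec:
  assumes "v \<in> carrier_vec (length Ws)" and "j < length Ws"
  shows "(gram_mat n Ws *\<^sub>v v) $ j = lie n (lin_comb (\<lambda>i. v $ i) Ws) (Ws!j)"
proof -
  have "(gram_mat n Ws *\<^sub>v v) $ j = (\<Sum>i<length Ws. v $ i * lie n (Ws!i) (Ws!j))"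
    using assms
    by (auto simp: gram_mat_def scalar_prod_def atLeast0LessThan lie_commute[of n "Ws!j"]
        mult.commute intro: sum.cong)
  then show ?thesis by (simp add: lie_lin_comb_left)
qed

lemma span_set_orthogonal_eq_zero:
  assumes G: "gram_det n Ws \<noteq> 0" and Z: "Z \<in> span_set Ws"
    and orth: "\<forall>W\<in>set Ws. lie n Z W = 0"
  shows "Z = (\<lambda>_. 0)"
proof -
  let ?m = "length Ws"
  obtain c where Z_eq: "Z = lin_comb c Ws" using Z unfolding span_set_def by blast
  define v where "v = vec ?m c"
  have v: "v \<in> carrier_vec ?m" by (simp add: v_def)
  have "lin_comb (\<lambda>i. v $ i) Ws = Z" unfolding Z_eq lin_comb_def v_def by auto
  then have "(gram_mat n Ws *\<^sub>v v) $ j = 0" if "j < ?m" for j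
    using gram_mat_mult_vec[OF v that] orth that by simp
  then have "gram_mat n Ws *\<^sub>v v = 0\<^sub>v ?m"
    by (intro eq_vecI) (auto simp: gram_mat_def)
  moreover have "det (gram_mat n Ws) \<noteq> 0" using G by (simp add: gram_det_def')
  ultimately have "v = 0\<^sub>v ?m"
    using det_0_iff_vec_prod_zero[OF gram_mat_carrier] v by blast
  then have "\<forall>i<?m. c i = 0" unfolding v_def by (metis index_vec index_zero_vec(1))
  then show ?thesis unfolding Z_eq lin_comb_def by auto
qed

lemma gram_system_solvable:
  assumes G: "gram_det n Ws \<noteq> 0"
  shows "\<exists>Z\<in>span_set Ws. \<forall>j<length Ws. lie n Z (Ws!j) = r j"
proof -
  let ?m = "length Ws" and ?G = "gram_mat n Ws"
  note Gc = gram_mat_carrier[of n Ws]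
  define v where "v = (1 / det ?G) \<cdot>\<^sub>v (adj_mat ?G *\<^sub>v vec ?m r)"
  have v: "v \<in> carrier_vec ?m" using adj_mat(1)[OF Gc] by (simp add: v_def)
  have "?G *\<^sub>v v = (1 / det ?G) \<cdot>\<^sub>v ((?G * adj_mat ?G) *\<^sub>v vec ?m r)"
    unfolding v_def using Gc adj_mat(1)[OF Gc]
    by (metis assoc_mult_mat_vec mult_mat_vec mult_mat_vec_carrier vec_carrier)
  also have "(?G * adj_mat ?G) *\<^sub>v vec ?m r = det ?G \<cdot>\<^sub>v vec ?m r"
    unfolding adj_mat(2)[OF Gc]
  proof (rule eq_vecI)
    fix i assume "i < dim_vec (det ?G \<cdot>\<^sub>v vec ?m r)"
    then have i: "i < ?m" by simp
    have "(det ?G \<cdot>\<^sub>m 1\<^sub>m ?m *\<^sub>v vec ?m r) $ i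
        = (\<Sum>k\<in>{0..<?m}. (if i = k then det ?G else 0) * r k)"
      using i by (auto simp: scalar_prod_def intro: sum.cong)
    also have "\<dots> = (\<Sum>k\<in>{0..<?m}. if i = k then det ?G * r k else 0)"
      by (rule sum.cong) auto
    finally show "(det ?G \<cdot>\<^sub>m 1\<^sub>m ?m *\<^sub>v vec ?m r) $ i = (det ?G \<cdot>\<^sub>v vec ?m r) $ i"
      using i by simp
  qed simp
  finally have "?G *\<^sub>v v = vec ?m r" using G by (auto simp: gram_det_def')
  then have "\<forall>j<?m. lie n (lin_comb (\<lambda>i. v $ i) Ws) (Ws!j) = r j"
    using gram_mat_mult_vec[OF v] by (metis index_vec)
  moreover have "lin_comb (\<lambda>i. v $ i) Ws \<in> span_set Ws" unfolding span_set_def by blast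
  ultimately show ?thesis by blast
qed

lemma lie_proj_characterization:
  assumes G: "gram_det n Ws \<noteq> 0"
  shows "lie_proj n Ws Y \<in> span_set Ws \<and> (\<forall>W\<in>set Ws. lie n (lie_proj n Ws Y) W = lie n Y W)"
proof -
  let ?Q = "\<lambda>Z. Z \<in> span_set Ws \<and> (\<forall>W\<in>set Ws. lie n (\<lambda>i. Y i - Z i) W = 0)"
  have Q_iff: "?Q Z \<longleftrightarrow> Z \<in> span_set Ws \<and> (\<forall>W\<in>set Ws. lie n Z W = lie n Y W)" for Z
    by (auto simp: lie_diff_left)
  obtain Z where Z: "?Q Z"
    using gram_system_solvable[OF G, of "\<lambda>j. lie n Y (Ws!j)"] Q_iff
    by (metis in_set_conv_nth)
  have "Z' = Z" if "?Q Z'" for Z'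
  proof -
    have "(\<lambda>i. Z' i - Z i) = (\<lambda>_. 0)"
      by (rule span_set_orthogonal_eq_zero[OF G])
        (use that Z Q_iff in \<open>auto intro: span_set_diff simp: lie_diff_left\<close>)
    then show ?thesis by (intro ext) (metis eq_iff_diff_eq_0)
  qed
  then have "?Q (lie_proj n Ws Y)" unfolding lie_proj_def by (rule theI[of ?Q, OF Z])
  then show ?thesis using Q_iff by blast
qed

lemma det_unit_except_row:
  assumes k: "k < m" and diag: "f (k, k) = 1"
    and unit: "\<And>i j. i < m \<Longrightarrow> j < m \<Longrightarrow> i \<noteq> k \<Longrightarrow> f (i, j) = (if i = j then 1 else 0)"
  shows "det (mat m m f) = 1"
proof -
  let ?M = "mat m m f"
  have "det ?M = (\<Sum>i<m. ?M $$ (i, k) * cofactor ?M i k)"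
    by (rule laplace_expansion_column) (use k in auto)
  also have "\<dots> = ?M $$ (k, k) * cofactor ?M k k
      + (\<Sum>i\<in>{..<m}-{k}. ?M $$ (i, k) * cofactor ?M i k)"
    by (rule sum.remove) (use k in auto)
  also have "(\<Sum>i\<in>{..<m}-{k}. ?M $$ (i, k) * cofactor ?M i k) = 0"
    by (rule sum.neutral) (use k unit in auto)
  also have "mat_delete ?M k k = 1\<^sub>m (m - 1)"
    by (rule eq_matI) (use k unit in \<open>auto simp: mat_delete_def\<close>)
  then have "cofactor ?M k k = 1" by (simp add: cofactor_def)
  finally show ?thesis using k diag by simp
qed

lemma gram_det_shear:
  assumes "P \<in> span_set (Xs @ [S])"
  shows "gram_det n (Xs @ [Y, S]) = gram_det n (Xs @ [\<lambda>i. Y i - P i, S])"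
proof -
  let ?k = "length Xs" and ?Q = "\<lambda>i. Y i - P i"
  let ?m = "Suc (Suc ?k)" and ?As = "Xs @ [Y, S]" and ?Bs = "Xs @ [?Q, S]"
  obtain c where P: "P = lin_comb c (Xs @ [S])" using assms unfolding span_set_def by blast
  \<comment> \<open>row \<open>k\<close> expresses \<open>Y = Q + P\<close>, the other rows are unit vectors\<close>
  define C where "C i j = (if i = ?k then (if j = ?k then 1 else if j < ?k then c j
      else if j = Suc ?k then c ?k else 0) else if j = i then 1 else 0)" for i j
  have rows: "?As!i = lin_comb (C i) ?Bs" if i: "i < ?m" for i
  proof
    fix x
    show "(?As!i) x = lin_comb (C i) ?Bs x"
    proof (cases "i = ?k")
      case True
      have "lin_comb (C i) ?Bs x = (\<Sum>j<?k. C i j * (?Bs!j) x) + ?Q x + c ?k * S x"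
        using True by (simp add: lin_comb_def C_def nth_append)
      also have "(\<Sum>j<?k. C i j * (?Bs!j) x) = (\<Sum>j<?k. c j * (Xs!j) x)"
        using True by (intro sum.cong) (auto simp: C_def nth_append)
      also have "P x = (\<Sum>j<?k. c j * (Xs!j) x) + c ?k * S x"
        unfolding P lin_comb_def by (simp add: nth_append)
      ultimately show ?thesis using True by (simp add: nth_append)
    next
      case False
      have "lin_comb (C i) ?Bs x = (\<Sum>j<?m. if j = i then (?Bs!j) x else 0)"
        unfolding lin_comb_def using False by (intro sum.cong) (auto simp: C_def)
      also have "\<dots> = (?As!i) x"
        using False i by (auto simp: nth_append nth_Cons' less_Suc_eq)
      finally show ?thesis by simp
    qed
  qed
  have "det (mat ?m ?m (\<lambda>(i, j). C i j)) = 1"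
    by (rule det_unit_except_row[of ?k]) (auto simp: C_def)
  then show ?thesis using gram_det_change_basis[of ?As ?m ?Bs C n] rows by simp
qed

lemma gram_det_schur:
  assumes P: "P \<in> span_set (Xs @ [S])"
    and proj: "\<forall>W\<in>set (Xs @ [S]). lie n P W = lie n Y W"
  shows "gram_det n (Xs @ [Y, S])
    = lie n (\<lambda>i. Y i - P i) (\<lambda>i. Y i - P i) * gram_det n (Xs @ [S])"
proof -
  let ?k = "length Xs" and ?Bs = "Xs @ [\<lambda>i. Y i - P i, S]"
  have "lie n (?Bs!?k) (?Bs!j) = 0" if "j < length ?Bs" "j \<noteq> ?k" for j
  proof -
    have "?Bs!j \<in> set (Xs @ [S])"
      using that by (auto simp: nth_append nth_Cons' split: if_splits)
    then have "lie n P (?Bs!j) = lie n Y (?Bs!j)" using proj by blast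
    then show ?thesis by (simp add: lie_diff_left nth_append)
  qed
  then have "gram_det n ?Bs = lie n (?Bs!?k) (?Bs!?k) * gram_det n (take ?k ?Bs @ drop (Suc ?k) ?Bs)"
    by (intro gram_det_orthogonal_nth) auto
  then show ?thesis using gram_det_shear[OF P] by simp
qed

section \<open>Signature of the Lie form\<close>

lemma nontrivial_solution_2x3:
  fixes a0 a1 a2 b0 b1 b2 :: real
  shows "\<exists>x y z. (x, y, z) \<noteq> (0, 0, 0) \<and> a0*x + a1*y + a2*z = 0 \<and> b0*x + b1*y + b2*z = 0"
proof (cases "a1*b2 - a2*b1 = 0 \<and> a2*b0 - a0*b2 = 0 \<and> a0*b1 - a1*b0 = 0")
  case False
  \<comment> \<open>the cross product of the two rows\<close>
  then show ?thesis
    by (intro exI[of _ "a1*b2 - a2*b1"] exI[of _ "a2*b0 - a0*b2"] exI[of _ "a0*b1 - a1*b0"])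
      (auto simp: algebra_simps)
next
  case True
  \<comment> \<open>the rows are proportional, so it suffices to solve one nonzero row\<close>
  consider "a0 = 0" "a1 = 0" "a2 = 0" | "a0 \<noteq> 0 \<or> a1 \<noteq> 0" | "a2 \<noteq> 0" by blast
  then show ?thesis
  proof cases
    case 1
    show ?thesis
    proof (cases "b0 = 0 \<and> b1 = 0")
      case True
      with 1 show ?thesis by (intro exI[of _ 1] exI[of _ 0]) auto
    next
      case False
      with 1 show ?thesis
        by (intro exI[of _ b1] exI[of _ "-b0"] exI[of _ 0]) (auto simp: algebra_simps)
    qed
  next
    case 2
    then show ?thesis using True
      by (intro exI[of _ a1] exI[of _ "-a0"] exI[of _ 0]) (auto simp: algebra_simps)
  next
    case 3
    then show ?thesis using True
      by (intro exI[of _ a2] exI[of _ 0] exI[of _ "-a0"]) (auto simp: algebra_simps)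
  qed
qed

lemma lie_self_sum_squares:
  "lie n X X + (X 0 - X (n+1))^2 / 2 + (X (n+2))^2
    = (X 0 + X (n+1))^2 / 2 + (\<Sum>i\<in>{1..n}. (X i)^2)"
  unfolding lie_def by (simp add: power2_eq_square field_simps)

lemma lie_self_nonneg_on_definite_subspace:
  assumes "X 0 = X (n+1)" and "X (n+2) = 0"
  shows "lie n X X \<ge> 0"
proof -
  have "0 \<le> (X 0 + X (n+1))^2 / 2 + (\<Sum>i\<in>{1..n}. (X i)^2)"
    by (intro add_nonneg_nonneg sum_nonneg) auto
  then show ?thesis using lie_self_sum_squares[of n X] assms by simp
qed

lemma lie_orthogonal_all_on_definite_subspace:
  assumes X02: "X 0 = X (n+1)" and X3: "X (n+2) = 0" and XX: "lie n X X = 0"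
  shows "lie n X W = 0"
proof -
  have "(X 0 + X (n+1))^2 / 2 + (\<Sum>i\<in>{1..n}. (X i)^2) = 0"
    using lie_self_sum_squares[of n X] assms by simp
  moreover have "(\<Sum>i\<in>{1..n}. (X i)^2) \<ge> 0" by (intro sum_nonneg) auto
  moreover have "(X 0 + X (n+1))^2 \<ge> 0" by simp
  ultimately have "(X 0 + X (n+1))^2 = 0" and sq: "(\<Sum>i\<in>{1..n}. (X i)^2) = 0"
    by linarith+
  have "X i = 0" if "i \<le> n+2" for i
  proof -
    have "i = 0 \<or> i \<in> {1..n} \<or> i = n+1 \<or> i = n+2" using that by auto
    then show ?thesis
      using sq X02 X3 \<open>(X 0 + X (n+1))^2 = 0\<close> by (auto simp: sum_nonneg_eq_0_iff)
  qed
  then show ?thesis by (simp add: lie_def)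
qed

lemma lie_orthogonal_two_negative:
  assumes S: "lie n S S < 0" and T: "lie n T T < 0" and ST: "lie n S T = 0"
    and WS: "lie n W S = 0" and WT: "lie n W T = 0"
  shows "lie n W W \<ge> 0 \<and> (lie n W W = 0 \<longrightarrow> (\<forall>X. lie n W X = 0))"
proof -
  \<comment> \<open>some nontrivial combination of \<open>S, T, W\<close> lies in the definite subspace\<close>
  obtain x y z :: real where nz: "(x, y, z) \<noteq> (0, 0, 0)"
    and e02: "(S 0 - S (n+1)) * x + (T 0 - T (n+1)) * y + (W 0 - W (n+1)) * z = 0"
    and e3: "S (n+2) * x + T (n+2) * y + W (n+2) * z = 0"
    using nontrivial_solution_2x3 by blast
  define Z where "Z = (\<lambda>i. x * S i + y * T i + z * W i)"
  have "Z 0 = Z (n+1)" and "Z (n+2) = 0" using e02 e3 unfolding Z_def by (simp_all add: algebra_simps)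
  then have Z_nonneg: "lie n Z Z \<ge> 0" by (rule lie_self_nonneg_on_definite_subspace)
  have "lie n Z Z = x^2 * lie n S S + y^2 * lie n T T + z^2 * lie n W W"
    unfolding Z_def using ST WS WT lie_commute[of n T S] lie_commute[of n S W] lie_commute[of n T W]
    by (simp only: lie_linear) (simp add: power2_eq_square algebra_simps)
  moreover have xS: "x^2 * lie n S S \<le> 0" and yT: "y^2 * lie n T T \<le> 0"
    using S T by (simp_all add: mult_nonneg_nonpos)
  ultimately have W_bound: "x^2 * lie n S S + y^2 * lie n T T + z^2 * lie n W W \<ge> 0"
    using Z_nonneg by linarith
  show ?thesis
  proof (intro conjI impI allI)
    show "lie n W W \<ge> 0"
    proof (rule ccontr)
      assume W_neg: "\<not> lie n W W \<ge> 0"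
      then have "z^2 * lie n W W \<le> 0" by (simp add: mult_nonneg_nonpos)
      then have "x^2 * lie n S S = 0" "y^2 * lie n T T = 0" "z^2 * lie n W W = 0"
        using W_bound xS yT by linarith+
      then show False using nz S T W_neg by simp
    qed
  next
    fix X assume W0: "lie n W W = 0"
    then have "x^2 * lie n S S + y^2 * lie n T T \<ge> 0" using W_bound by simp
    then have "x^2 * lie n S S = 0" "y^2 * lie n T T = 0" using xS yT by linarith+
    then have "x = 0" "y = 0" using S T by simp_all
    with nz e02 e3 have "W 0 = W (n+1)" "W (n+2) = 0" by simp_all
    then show "lie n W X = 0" using W0 by (rule lie_orthogonal_all_on_definite_subspace)
  qed
qed

lemma gram_det_nonneg_orthogonal_two_negative:
  assumes S: "lie n S S < 0" and T: "lie n T T < 0" and ST: "lie n S T = 0"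
  shows "\<forall>W\<in>set Ws. lie n W S = 0 \<and> lie n W T = 0 \<Longrightarrow> gram_det n Ws \<ge> 0"
proof (induction "length Ws" arbitrary: Ws)
  case 0
  then show ?case by (simp add: gram_det_def)
next
  case (Suc m Ws)
  then obtain W Vs where Ws: "Ws = W # Vs" and m: "m = length Vs" by (cases Ws) auto
  have WS: "lie n W S = 0" and WT: "lie n W T = 0" using Suc.prems Ws by auto
  note W_square = lie_orthogonal_two_negative[OF S T ST WS WT]
  show ?case
  proof (cases "lie n W W = 0")
    case True
    then have "gram_det n (W # Vs) = lie n W W * gram_det n Vs"
      using W_square by (intro gram_det_cons_orthogonal) auto
    then show ?thesis using True Ws by simp
  next
    case False
    then have W_pos: "lie n W W > 0" using W_square by simp
    have "\<forall>V\<in>set (map (lie_reject n W) Vs). lie n V S = 0 \<and> lie n V T = 0"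
      using Suc.prems Ws WS WT by (auto simp: lie_reject_left)
    then have "gram_det n (map (lie_reject n W) Vs) \<ge> 0" using Suc.hyps(1) m by simp
    moreover obtain d where
      "gram_det n (W # Vs) = d^2 * (lie n W W * gram_det n (map (lie_reject n W) Vs))"
      using gram_det_cons_reject False by blast
    ultimately show ?thesis using W_pos Ws by simp
  qed
qed

lemma span_set_exchange_reject:
  assumes j: "j < length Xs" and cj: "c j \<noteq> 0" and T: "T = lin_comb c (Xs @ [S])"
  shows "\<forall>W\<in>set (Xs @ [S]).
    W \<in> span_set (S # T # map (\<lambda>X. lie_reject n T (lie_reject n S X)) (take j Xs @ drop (Suc j) Xs))"
proof -
  let ?Ob = "Xs @ [S]" and ?R = "take j Xs @ drop (Suc j) Xs"
  let ?B = "S # T # map (\<lambda>X. lie_reject n T (lie_reject n S X)) ?R"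
  have S_B: "S \<in> span_set ?B" and T_B: "T \<in> span_set ?B" by (simp_all add: member_in_span_set)
  have "W \<in> span_set ?B" if "W \<in> set (T # ?R @ [S])" for W
  proof -
    have "lie_reject n T (lie_reject n S W) \<in> span_set ?B" if "W \<in> set ?R"
      using that by (intro member_in_span_set) auto
    then show ?thesis using that S_B T_B by (auto intro: in_span_set_lie_reject)
  qed
  moreover have "W \<in> span_set (T # ?R @ [S])" if "W \<in> set ?Ob" for W
  proof -
    have Ob_split: "?Ob = take j ?Ob @ ?Ob!j # drop (Suc j) ?Ob"
      and R_S: "take j ?Ob @ drop (Suc j) ?Ob = ?R @ [S]"
      using j by (simp_all add: id_take_nth_drop nth_append)
    have "?Ob!j \<in> span_set (T # take j ?Ob @ drop (Suc j) ?Ob)"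
      unfolding T by (rule span_set_exchange) (use j cj in auto)
    then have "?Ob!j \<in> span_set (T # ?R @ [S])" by (simp only: R_S)
    then show ?thesis using that Ob_split R_S
      by (metis Un_iff member_in_span_set set_ConsD set_append list.set_intros(2))
  qed
  ultimately show ?thesis using span_set_mono by blast
qed

lemma gram_det_nonneg_if_orthogonal_negative:
  assumes S: "lie n S S < 0" and T_span: "T \<in> span_set (Xs @ [S])"
    and TS: "lie n T S = 0" and T: "lie n T T < 0"
  shows "gram_det n (Xs @ [S]) \<ge> 0"
proof -
  \<comment> \<open>exchange a suitable \<open>Xs!j\<close> for \<open>T\<close>; the new basis \<open>S, T, \<dots>\<close> can be made orthogonal\<close>
  let ?k = "length Xs" and ?Ob = "Xs @ [S]"
  obtain c where T_eq: "T = lin_comb c ?Ob" using T_span unfolding span_set_def by blast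
  have ST: "lie n S T = 0" using TS by (subst lie_commute)
  obtain j where j: "j < ?k" and cj: "c j \<noteq> 0"
  proof (rule ccontr)
    assume "\<not> thesis"
    then have "\<forall>j<?k. c j = 0" using that by blast
    then have "T = (\<lambda>i. c ?k * S i)" unfolding T_eq lin_comb_def by (simp add: nth_append)
    then have "lie n T S = c ?k * lie n S S" and "lie n T T = c ?k * c ?k * lie n S S"
      by (simp_all add: lie_scale_left lie_scale_right)
    then show False using TS S T by simp
  qed
  define rej where "rej X = lie_reject n T (lie_reject n S X)" for X
  define R where "R = take j Xs @ drop (Suc j) Xs"
  have rej_S: "lie n S (rej X) = 0" and rej_T: "lie n T (rej X) = 0" for X
    using S T TS by (simp_all add: rej_def lie_commute[of n _ "lie_reject n T _"] lie_reject_left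
        lie_commute[of n S T])
  have "length ?Ob = length (S # T # map rej R)" using j by (simp add: R_def)
  then obtain d where "gram_det n ?Ob = d^2 * gram_det n (S # T # map rej R)"
    using gram_det_change_span span_set_exchange_reject[OF j cj T_eq]
    unfolding rej_def R_def by blast
  moreover have "gram_det n (S # T # map rej R) = lie n S S * (lie n T T * gram_det n (map rej R))"
    using rej_S rej_T ST by (simp add: gram_det_cons_orthogonal)
  moreover have "gram_det n (map rej R) \<ge> 0"
    using rej_S rej_T
    by (intro gram_det_nonneg_orthogonal_two_negative[OF S T ST]) (auto simp: lie_commute[of n "rej _"])
  then have "lie n S S * (lie n T T * gram_det n (map rej R)) \<ge> 0"
    using S T by (intro mult_nonpos_nonpos mult_nonpos_nonneg) auto
  ultimately show ?thesis by simp
qed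

lemma span_set_orthogonal_nonpositive_eq_zero:
  assumes G: "gram_det n (Xs @ [S]) < 0" and S: "lie n S S < 0"
    and Z: "Z \<in> span_set (Xs @ [S])" and ZS: "lie n Z S = 0" and ZZ: "lie n Z Z \<le> 0"
  shows "Z = (\<lambda>_. 0)"
proof (rule ccontr)
  assume Z0: "Z \<noteq> (\<lambda>_. 0)"
  let ?Ob = "Xs @ [S]"
  obtain T where "T \<in> span_set ?Ob" "lie n T S = 0" "lie n T T < 0"
  proof (cases "lie n Z Z < 0")
    case True
    then show ?thesis using that Z ZS by blast
  next
    case False
    \<comment> \<open>pair the isotropic \<open>Z\<close> with some \<open>U\<close> of the span to get a negative vector\<close>
    then have ZZ0: "lie n Z Z = 0" using ZZ by simp
    obtain U where U: "U \<in> set ?Ob" and ZU: "lie n Z U \<noteq> 0"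
      using span_set_orthogonal_eq_zero[OF _ Z] G Z0 by force
    define U' where "U' = lie_reject n S U"
    have U'_span: "U' \<in> span_set ?Ob"
      unfolding U'_def using U by (intro lie_reject_in_span_set member_in_span_set) auto
    have U'S: "lie n U' S = 0" unfolding U'_def using S by (simp add: lie_reject_orthogonal)
    have U'Z: "lie n U' Z = lie n Z U"
      unfolding U'_def using ZS by (simp add: lie_reject_left lie_commute[of n S Z] lie_commute[of n U Z])
    define lam where "lam = - (lie n U' U' + 1) / (2 * lie n U' Z)"
    define T where "T = (\<lambda>i. U' i + lam * Z i)"
    have "lie n T T = lie n U' U' + 2 * lam * lie n U' Z + lam^2 * lie n Z Z"
      unfolding T_def by (simp only: lie_linear) (simp add: lie_commute[of n Z U'] power2_eq_square algebra_simps)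
    also have "\<dots> = -1" using U'Z ZU ZZ0 unfolding lam_def by (simp add: field_simps)
    finally have "lie n T T < 0" by simp
    moreover have "T \<in> span_set ?Ob" unfolding T_def by (rule span_set_add[OF U'_span span_set_scale[OF Z]])
    moreover have "lie n T S = 0" unfolding T_def by (simp add: lie_add_left lie_scale_left U'S ZS)
    ultimately show ?thesis using that by blast
  qed
  then show False using gram_det_nonneg_if_orthogonal_negative[OF S] G by force
qed

section \<open>Critical points of \<open>h\<close>\<close>

text \<open>Polarizations of the quadratic forms \<open>X \<mapsto> \<Delta>(X,S)\<close> and \<open>X \<mapsto> \<Delta>(X,Y,S)\<close>.\<close>

definition gram_pair_polar :: "nat \<Rightarrow> (nat \<Rightarrow> real) \<Rightarrow> (nat \<Rightarrow> real) \<Rightarrow> (nat \<Rightarrow> real) \<Rightarrow> real" where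
  "gram_pair_polar n S X V = lie n X V * lie n S S - lie n X S * lie n V S"

definition gram_triple_polar ::
    "nat \<Rightarrow> (nat \<Rightarrow> real) \<Rightarrow> (nat \<Rightarrow> real) \<Rightarrow> (nat \<Rightarrow> real) \<Rightarrow> (nat \<Rightarrow> real) \<Rightarrow> real" where
  "gram_triple_polar n Y S X V = lie n X V * gram_det n [Y, S] - lie n S S * lie n X Y * lie n V Y
     + lie n Y S * (lie n X Y * lie n V S + lie n X S * lie n V Y) - lie n Y Y * lie n X S * lie n V S"

lemma gram_pair_polar_diag: "gram_pair_polar n S X X = gram_det n [X, S]"
  by (simp add: gram_pair_polar_def gram_det_pair)

lemma gram_triple_polar_diag: "gram_triple_polar n Y S X X = gram_det n [X, Y, S]"
  by (simp add: gram_triple_polar_def gram_det_triple gram_det_pair lie_commute[of n S Y]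
      algebra_simps)

lemma gram_det_pair_line:
  "gram_det n [\<lambda>i. X i + t * V i, S]
    = gram_det n [X, S] + 2 * t * gram_pair_polar n S X V + t^2 * gram_det n [V, S]"
  by (simp add: gram_det_pair gram_pair_polar_def lie_add_left lie_scale_left lie_add_right
      lie_scale_right lie_commute[of n V X] power2_eq_square algebra_simps)

lemma gram_det_triple_line:
  "gram_det n [\<lambda>i. X i + t * V i, Y, S]
    = gram_det n [X, Y, S] + 2 * t * gram_triple_polar n Y S X V + t^2 * gram_det n [V, Y, S]"
  by (simp add: gram_det_triple gram_det_pair gram_triple_polar_def lie_add_left lie_scale_left
      lie_add_right lie_scale_right lie_commute[of n V X] lie_commute[of n S Y]
      power2_eq_square algebra_simps)

lemma critical_on_hfun_if_polar_proportional:
  assumes X: "X \<in> span_set Ws" and DX: "gram_det n [X, S] \<noteq> 0" and DY: "gram_det n [Y, S] \<noteq> 0"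
    and proportional: "\<forall>V\<in>span_set Ws. gram_triple_polar n Y S X V = c * gram_pair_polar n S X V"
  shows "critical_on Ws (hfun n Y S) X"
  unfolding critical_on_def
proof
  fix V assume V: "V \<in> span_set Ws"
  define N where "N t = gram_det n [X, Y, S] + 2 * t * gram_triple_polar n Y S X V
    + t^2 * gram_det n [V, Y, S]" for t
  define D where "D t = (gram_det n [X, S] + 2 * t * gram_pair_polar n S X V
    + t^2 * gram_det n [V, S]) * gram_det n [Y, S]" for t
  have hfun_line: "(\<lambda>t. hfun n Y S (\<lambda>i. X i + t * V i)) = (\<lambda>t. N t / D t)"
    by (simp add: hfun_def gram_det_pair_line gram_det_triple_line N_def D_def)
  have "(N has_real_derivative 2 * gram_triple_polar n Y S X V) (at 0)"
    unfolding N_def by (auto intro!: derivative_eq_intros)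
  moreover have "(D has_real_derivative 2 * gram_pair_polar n S X V * gram_det n [Y, S]) (at 0)"
    unfolding D_def by (auto intro!: derivative_eq_intros)
  moreover have "D 0 \<noteq> 0" using DX DY by (simp add: D_def)
  ultimately have "((\<lambda>t. N t / D t) has_real_derivative
      (2 * gram_triple_polar n Y S X V * D 0 - N 0 * (2 * gram_pair_polar n S X V * gram_det n [Y, S]))
      / (D 0 * D 0)) (at 0)"
    by (rule DERIV_divide)
  moreover have "2 * gram_triple_polar n Y S X V * D 0
      - N 0 * (2 * gram_pair_polar n S X V * gram_det n [Y, S]) = 0"
    using proportional[rule_format, OF V] proportional[rule_format, OF X]
    by (simp add: N_def D_def gram_pair_polar_diag gram_triple_polar_diag)
  ultimately show "((\<lambda>t. hfun n Y S (\<lambda>i. X i + t * V i)) has_real_derivative 0) (at 0)"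
    unfolding hfun_line by simp
qed

lemma exists_span_set_orthogonal:
  assumes "3 \<le> length Ws" and indep: "lin_indep Ws"
  shows "\<exists>X\<in>span_set Ws. X \<noteq> (\<lambda>_. 0) \<and> lie n X A = 0 \<and> lie n X B = 0"
proof -
  obtain x y z :: real where nz: "(x, y, z) \<noteq> (0, 0, 0)"
    and eA: "lie n (Ws!0) A * x + lie n (Ws!1) A * y + lie n (Ws!2) A * z = 0"
    and eB: "lie n (Ws!0) B * x + lie n (Ws!1) B * y + lie n (Ws!2) B * z = 0"
    using nontrivial_solution_2x3 by blast
  define c where "c (j::nat) = (if j = 0 then x else if j = 1 then y else if j = 2 then z else 0)" for j
  have lie_X: "lie n (lin_comb c Ws) W = x * lie n (Ws!0) W + y * lie n (Ws!1) W + z * lie n (Ws!2) W"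
    for W
  proof -
    have "lie n (lin_comb c Ws) W = (\<Sum>j<3. c j * lie n (Ws!j) W)"
      unfolding lie_lin_comb_left by (rule sum.mono_neutral_right) (use assms in \<open>auto simp: c_def\<close>)
    then show ?thesis by (simp add: numeral_3_eq_3 numeral_2_eq_2 c_def)
  qed
  have "lin_comb c Ws \<noteq> (\<lambda>_. 0)"
  proof
    assume "lin_comb c Ws = (\<lambda>_. 0)"
    then have "\<forall>j<length Ws. c j = 0" using indep unfolding lin_indep_def by blast
    moreover have "0 < length Ws" "1 < length Ws" "2 < length Ws" using assms(1) by linarith+
    ultimately have "c 0 = 0" "c 1 = 0" "c 2 = 0" by blast+
    then show False using nz by (simp add: c_def)
  qed
  moreover have "lin_comb c Ws \<in> span_set Ws" unfolding span_set_def by blast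
  ultimately show ?thesis using eA eB lie_X by (metis mult.commute)
qed

section \<open>The projection of \<open>y\<close> and the points of \<open>\<langle>s\<rangle>\<^sup>\<perp>\<close> orthogonal to \<open>y\<close>\<close>

context
  fixes n :: nat and Xs :: "(nat \<Rightarrow> real) list" and S Y :: "nat \<Rightarrow> real"
  assumes gram_neg: "gram_det n (Xs @ [S]) < 0"
    and S_nonpos: "lie n S S \<le> 0" and Y_null: "lie n Y Y = 0" and YS: "lie n Y S \<noteq> 0"
begin

lemma gram_det_pair_Y_S: "gram_det n [Y, S] = - ((lie n Y S)^2)"
  using Y_null by (simp add: gram_det_pair power2_eq_square)

context
  fixes P :: "nat \<Rightarrow> real"
  assumes P_span: "P \<in> span_set (Xs @ [S])"
    and P_proj: "\<forall>W\<in>set (Xs @ [S]). lie n P W = lie n Y W"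
begin

lemma lie_proj_span: "V \<in> span_set (Xs @ [S]) \<Longrightarrow> lie n P V = lie n Y V"
  using lie_eq_on_span_set[OF P_proj] .

lemma lie_proj_S: "lie n P S = lie n Y S"
  by (rule lie_proj_span) (simp add: member_in_span_set)

lemma lie_proj_Y: "lie n P Y = lie n P P"
  using lie_proj_span[OF P_span] lie_commute[of n Y P] by simp

lemma gram_det_pair_proj_nonzero:
  assumes not_S: "\<not> (\<exists>c. P = (\<lambda>i. c * S i))"
  shows "gram_det n [P, S] \<noteq> 0"
proof
  assume D0: "gram_det n [P, S] = 0"
  then have S_neg: "lie n S S < 0"
    using S_nonpos YS by (cases "lie n S S = 0") (auto simp: gram_det_pair lie_proj_S)
  \<comment> \<open>otherwise the component of \<open>P\<close> orthogonal to \<open>S\<close> would be a null vector of the span\<close>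
  let ?W = "lie_reject n S P"
  have "?W \<in> span_set (Xs @ [S])"
    by (intro lie_reject_in_span_set P_span member_in_span_set) simp
  moreover have "lie n ?W S = 0" using S_neg by (simp add: lie_reject_orthogonal)
  moreover have "lie n ?W ?W = 0"
    using D0 S_neg by (simp add: lie_reject_self gram_det_pair power2_eq_square field_simps)
  ultimately have "?W = (\<lambda>_. 0)"
    using span_set_orthogonal_nonpositive_eq_zero[OF gram_neg S_neg] by simp
  then have "P = (\<lambda>i. lie n P S / lie n S S * S i)"
    unfolding lie_reject_def by (metis eq_iff_diff_eq_0)
  then show False using not_S by blast
qed

lemma hfun_proj_eq_discr:
  assumes DP: "gram_det n [P, S] \<noteq> 0"
  shows "hfun n Y S P = discr n Xs Y S"
proof -
  \<comment> \<open>both sides equal \<open>-(P|P) / \<Delta>(Y,S)\<close>\<close>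
  have "lie n (\<lambda>i. Y i - P i) (\<lambda>i. Y i - P i) = - lie n P P"
    using Y_null lie_proj_Y by (simp add: lie_diff_left lie_diff_right lie_commute[of n Y P])
  then have "gram_det n (Xs @ [Y, S]) = - lie n P P * gram_det n (Xs @ [S])"
    using gram_det_schur[OF P_span P_proj] by simp
  moreover have "gram_det n [P, Y, S] = - lie n P P * gram_det n [P, S]"
    using Y_null lie_proj_Y lie_proj_S
    by (simp add: gram_det_triple gram_det_pair lie_commute[of n S Y] algebra_simps)
  ultimately show ?thesis
    using gram_neg DP by (simp add: hfun_def discr_def)
qed

lemma critical_on_hfun_proj:
  assumes DP: "gram_det n [P, S] \<noteq> 0"
  shows "critical_on (Xs @ [S]) (hfun n Y S) P"
proof (rule critical_on_hfun_if_polar_proportional[OF P_span DP])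
  show "gram_det n [Y, S] \<noteq> 0" using YS by (simp add: gram_det_pair_Y_S)
  show "\<forall>V\<in>span_set (Xs @ [S]).
      gram_triple_polar n Y S P V = - lie n P P * gram_pair_polar n S P V"
  proof
    fix V assume "V \<in> span_set (Xs @ [S])"
    then have "lie n P V = lie n V Y" using lie_proj_span lie_commute[of n Y V] by simp
    then show "gram_triple_polar n Y S P V = - lie n P P * gram_pair_polar n S P V"
      using Y_null lie_proj_Y lie_proj_S
      by (simp add: gram_triple_polar_def gram_pair_polar_def gram_det_pair_Y_S
          power2_eq_square algebra_simps)
  qed
qed

end

lemma exists_point_orthogonal_S_Y:
  assumes S_neg: "lie n S S < 0" and k: "2 \<le> length Xs" and indep: "lin_indep (Xs @ [S])"
  shows "\<exists>X. X \<in> span_set (Xs @ [S]) \<and> X \<noteq> (\<lambda>_. 0) \<and> lie n X S = 0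
    \<and> \<not> (\<exists>c. X = (\<lambda>i. c * S i)) \<and> lie n X Y = 0"
proof -
  obtain X where X: "X \<in> span_set (Xs @ [S])" "X \<noteq> (\<lambda>_. 0)" "lie n X S = 0" "lie n X Y = 0"
    using exists_span_set_orthogonal[OF _ indep] k by force
  moreover have "\<not> (\<exists>c. X = (\<lambda>i. c * S i))"
  proof
    assume "\<exists>c. X = (\<lambda>i. c * S i)"
    then obtain c where c: "X = (\<lambda>i. c * S i)" ..
    then have "c = 0" using X(3) S_neg by (simp add: lie_scale_left)
    then show False using c X(2) by simp
  qed
  ultimately show ?thesis by blast
qed

lemma point_orthogonal_S_Y_critical:
  assumes S_neg: "lie n S S < 0" and X_span: "X \<in> span_set (Xs @ [S])"
    and X0: "X \<noteq> (\<lambda>_. 0)" and XS: "lie n X S = 0" and XY: "lie n X Y = 0"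
  shows "gram_det n [X, S] \<noteq> 0 \<and> critical_on (Xs @ [S]) (hfun n Y S) X
    \<and> hfun n Y S X = 1 / lie n S S"
proof -
  have "lie n X X > 0"
    using span_set_orthogonal_nonpositive_eq_zero[OF gram_neg S_neg X_span XS] X0 by force
  moreover have DX_eq: "gram_det n [X, S] = lie n X X * lie n S S"
    using XS by (simp add: gram_det_pair)
  ultimately have DX: "gram_det n [X, S] \<noteq> 0" using S_neg by simp
  have "gram_det n [X, Y, S] = - lie n X X * (lie n Y S)^2"
    using XS XY Y_null by (simp add: gram_det_triple power2_eq_square)
  then have "hfun n Y S X = 1 / lie n S S"
    using \<open>lie n X X > 0\<close> S_neg XS YS
    by (simp add: hfun_def DX_eq gram_det_pair_Y_S power2_eq_square)
  moreover have "critical_on (Xs @ [S]) (hfun n Y S) X"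
  proof (rule critical_on_hfun_if_polar_proportional[OF X_span DX])
    show "gram_det n [Y, S] \<noteq> 0" using YS by (simp add: gram_det_pair_Y_S)
    show "\<forall>V\<in>span_set (Xs @ [S]).
        gram_triple_polar n Y S X V = - ((lie n Y S)^2) / lie n S S * gram_pair_polar n S X V"
      using XS XY Y_null S_neg
      by (simp add: gram_triple_polar_def gram_pair_polar_def gram_det_pair_Y_S)
  qed
  ultimately show ?thesis using DX by blast
qed

end

theorem mainTheorem10:
  fixes n :: nat and Xs :: "(nat \<Rightarrow> real) list" and S Y :: "nat \<Rightarrow> real"
  assumes n: "n \<ge> 3"
    and k: "2 \<le> length Xs" "length Xs \<le> n - 1"
    and Xvec: "\<forall>X\<in>set Xs. is_vec n X \<and> X \<noteq> (\<lambda>_. 0) \<and> lie n X X = 0"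
    and Svec: "is_vec n S" and SS: "lie n S S \<le> 0"
    and indep: "lin_indep (Xs @ [S])"
    and Dneg: "gram_det n (Xs @ [S]) < 0"
    and Yvec: "is_vec n Y" "Y \<noteq> (\<lambda>_. 0)" "lie n Y Y = 0"
    and Ynot: "Y \<notin> span_set (Xs @ [S])"
    and YS: "lie n Y S \<noteq> 0"
    and pns: "\<not> (\<exists>c. lie_proj n (Xs @ [S]) Y = (\<lambda>i. c * S i))"
  shows "(let P = lie_proj n (Xs @ [S]) Y in
            P \<noteq> (\<lambda>_. 0) \<and> gram_det n [P, S] \<noteq> 0
            \<and> hfun n Y S P = discr n Xs Y S
            \<and> critical_on (Xs @ [S]) (hfun n Y S) P)
       \<and> (lie n S S < 0 \<longrightarrow>
            (\<exists>X0. X0 \<in> span_set (Xs @ [S]) \<and> X0 \<noteq> (\<lambda>_. 0) \<and> lie n X0 S = 0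
                  \<and> \<not> (\<exists>c. X0 = (\<lambda>i. c * S i)) \<and> lie n X0 Y = 0)
          \<and> (\<forall>X0. X0 \<in> span_set (Xs @ [S]) \<and> X0 \<noteq> (\<lambda>_. 0) \<and> lie n X0 S = 0
                  \<and> \<not> (\<exists>c. X0 = (\<lambda>i. c * S i)) \<and> lie n X0 Y = 0
                \<longrightarrow> gram_det n [X0, S] \<noteq> 0
                    \<and> critical_on (Xs @ [S]) (hfun n Y S) X0
                    \<and> hfun n Y S X0 = 1 / lie n S S))"
proof -
  define P where "P = lie_proj n (Xs @ [S]) Y"
  have P: "P \<in> span_set (Xs @ [S])" "\<forall>W\<in>set (Xs @ [S]). lie n P W = lie n Y W"
    using lie_proj_characterization[of n "Xs @ [S]" Y] Dneg by (simp_all add: P_def)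
  have not_S: "\<not> (\<exists>c. P = (\<lambda>i. c * S i))" using pns by (simp add: P_def)
  then have "P \<noteq> (\<lambda>_. 0)" by force
  moreover note DP = gram_det_pair_proj_nonzero[OF Dneg SS Yvec(3) YS P not_S]
  moreover note hfun_proj_eq_discr[OF Dneg SS Yvec(3) YS P DP]
  moreover note critical_on_hfun_proj[OF Dneg SS Yvec(3) YS P DP]
  moreover note exists_point_orthogonal_S_Y[OF Dneg SS Yvec(3) YS _ k(1) indep]
  moreover note point_orthogonal_S_Y_critical[OF Dneg SS Yvec(3) YS]
  ultimately show ?thesis unfolding P_def[symmetric] Let_def by blast
qed

end
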